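(* Let $R\in(0,1)$ and let $c\colon[R,1]\to(0,\infty)$ be $C^{1,1}$ and satisfy the Herglotz condition $\frac{d}{dr}\left(\frac{r}{c(r)}\right)>0$. For a Lipschitz continuous $\lambda\colon[R,1]\to\mathbb C$, the function $$\Lambda^\lambda(r;x)=\cosh\left(\int_x^r\lambda(u)H(u;x)\,du\right)$$ is Lipschitz continuous on $\{(r,x);R\leq x<r\leq1\}$. It extends continuously to the diagonal $\{(r,r);R\leq r\leq1\}$ and has the constant value $1$ there.
   Context: $H(r;z)=\frac1{c(r)}\left(1-\left(\frac{z\,c(r)}{r\,c(z)}\right)^2\right)^{-1/2}$ for $R\leq z<r\leq1$. *)

theory Defs
  imports "HOL-Analysis.Analysis"
begin

definition H :: "(real \<Rightarrow> real) \<Rightarrow> real \<Rightarrow> real \<Rightarrow> real" where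
  "H c r z = (1 / c r) * (1 - (z * c r / (r * c z))\<^sup>2) powr (-1/2)"

text \<open>Lambda^lambda(r;x) = cosh (integral from x to r of lambda(u) H(u;x) du)
  (Henstock-Kurzweil integral, which covers the improper integral at u = x).\<close>
definition Lam :: "(real \<Rightarrow> real) \<Rightarrow> (real \<Rightarrow> complex) \<Rightarrow> real \<Rightarrow> real \<Rightarrow> complex" where
  "Lam c lam r x = cosh (integral {x..r} (\<lambda>u. lam u * complex_of_real (H c u x)))"

end

theory Submission
  imports Defs
begin

(* Write rho t = t / c t. Then 1 - (x c(u) / (u c(x)))^2 = (u - x) defect(u,x) / rho(u)^2, where
   defect(u,x) = (rho u + rho x) times the mean slope of rho between x and u; the Herglotz condition
   keeps it bounded below, so it is Lipschitz and bounded away from 0 on the whole square [R,1]^2.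
   Substituting u = x + s (r - x), the integral in Lam becomes sqrt (r - x) reduced(r,x), where
   reduced integrates s^(-1/2) against a Lipschitz function of (r,x), hence is itself bounded and
   Lipschitz. Finally cosh z depends only on z^2, and (sqrt (r - x) reduced)^2 = (r - x) reduced^2
   is Lipschitz and vanishes on the diagonal. *)

lemma norm_sinh_le:
  fixes z :: "'a::{banach, real_normed_field}"
  assumes "norm z \<le> B"
  shows "norm (sinh z) \<le> exp B * norm z"
proof -
  have "norm (sinh z - sinh 0) \<le> exp B * norm (z - 0)"
  proof (rule field_differentiable_bound[where S="cball 0 B" and f'=cosh])
    fix w :: 'a assume w: "w \<in> cball 0 B"
    show "(sinh has_field_derivative cosh w) (at w within cball 0 B)"
      by (auto intro!: derivative_eq_intros)
    have "norm (cosh w) \<le> (norm (exp w) + norm (exp (-w))) / 2"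
      using norm_triangle_ineq[of "exp w" "exp (-w)"] unfolding cosh_def
      by (simp add: divide_right_mono)
    also have "\<dots> \<le> (exp (norm w) + exp (norm (-w))) / 2"
      by (intro divide_right_mono add_mono norm_exp) auto
    also have "\<dots> \<le> exp B" using w by simp
    finally show "norm (cosh w) \<le> exp B" .
  qed (use assms in \<open>auto intro: order_trans[OF norm_ge_zero]\<close>)
  thus ?thesis by simp
qed

lemma cosh_diff_cosh:
  fixes a b :: "'a::{banach, real_normed_field}"
  shows "cosh a - cosh b = 2 * sinh ((a + b) / 2) * sinh ((a - b) / 2)"
proof -
  have "cosh a = cosh ((a + b) / 2 + (a - b) / 2)" "cosh b = cosh ((a + b) / 2 - (a - b) / 2)"
    by (simp_all add: field_simps)
  thus ?thesis by (simp add: cosh_add cosh_diff)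
qed

text \<open>cosh is an entire function of z squared, whence a Lipschitz bound in terms of squares.\<close>
lemma norm_cosh_diff_le:
  fixes a b :: "'a::{banach, real_normed_field}"
  assumes "norm a \<le> B" "norm b \<le> B"
  shows "norm (cosh a - cosh b) \<le> exp B ^ 2 / 2 * norm (a^2 - b^2)"
proof -
  have "norm ((a + b) / 2) \<le> B" "norm ((a - b) / 2) \<le> B"
    using assms norm_triangle_ineq[of a b] norm_triangle_ineq4[of a b] by (simp_all add: norm_divide)
  hence "norm (cosh a - cosh b) \<le> 2 * (exp B * norm ((a + b) / 2)) * (exp B * norm ((a - b) / 2))"
    unfolding cosh_diff_cosh norm_mult
    by (intro mult_mono mult_left_mono norm_sinh_le) auto
  also have "\<dots> = exp B ^ 2 / 2 * norm ((a + b) * (a - b))"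
    by (simp add: norm_divide norm_mult power2_eq_square)
  also have "(a + b) * (a - b) = a^2 - b^2"
    by (simp add: power2_eq_square algebra_simps)
  finally show ?thesis .
qed

definition bounded_lipschitz_on :: "'a::metric_space set \<Rightarrow> ('a \<Rightarrow> 'b::real_normed_vector) \<Rightarrow> bool"
  where "bounded_lipschitz_on S f \<longleftrightarrow> bounded (f ` S) \<and> (\<exists>L. L-lipschitz_on S f)"

lemma bounded_lipschitz_onI:
  assumes "\<And>p. p \<in> S \<Longrightarrow> norm (f p) \<le> B" "L-lipschitz_on S f"
  shows "bounded_lipschitz_on S f"
  using assms unfolding bounded_lipschitz_on_def bounded_iff by blast

lemma bounded_lipschitz_onE:
  assumes "bounded_lipschitz_on S f"
  obtains B L where "0 \<le> B" "\<And>p. p \<in> S \<Longrightarrow> norm (f p) \<le> B" "L-lipschitz_on S f"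
  using assms unfolding bounded_lipschitz_on_def bounded_pos by (auto intro: less_imp_le)

lemma bounded_lipschitz_on_continuous_on: "bounded_lipschitz_on S f \<Longrightarrow> continuous_on S f"
  unfolding bounded_lipschitz_on_def using lipschitz_on_continuous_on by blast

lemma bounded_lipschitz_on_subset:
  "bounded_lipschitz_on S f \<Longrightarrow> T \<subseteq> S \<Longrightarrow> bounded_lipschitz_on T f"
  unfolding bounded_lipschitz_on_def by (blast intro: lipschitz_on_subset bounded_subset)

lemma lipschitz_on_bounded_imp_bounded_lipschitz_on:
  assumes f: "L-lipschitz_on S f" and S: "bounded S"
  shows "bounded_lipschitz_on S f"
proof (cases "S = {}")
  case False
  then obtain a where a: "a \<in> S" by blast
  obtain e where e: "\<And>p. p \<in> S \<Longrightarrow> dist a p \<le> e" using S bounded_any_center by metis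
  show ?thesis
  proof (rule bounded_lipschitz_onI[OF _ f])
    fix p assume p: "p \<in> S"
    have "norm (f p) \<le> norm (f a) + dist (f p) (f a)"
      using norm_triangle_ineq2[of "f p" "f a"] by (simp add: dist_norm)
    also have "dist (f p) (f a) \<le> L * dist p a" using lipschitz_onD[OF f p a] .
    also have "\<dots> \<le> L * e"
      using e[OF p] lipschitz_on_nonneg[OF f] by (simp add: dist_commute mult_left_mono)
    finally show "norm (f p) \<le> norm (f a) + L * e" by simp
  qed
qed (use f in \<open>auto simp: bounded_lipschitz_on_def\<close>)

lemma bounded_lipschitz_on_add:
  assumes "bounded_lipschitz_on S f" "bounded_lipschitz_on S g"
  shows "bounded_lipschitz_on S (\<lambda>p. f p + g p)"
  using assms unfolding bounded_lipschitz_on_def by (blast intro: bounded_plus_comp lipschitz_on_add)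

lemma bounded_lipschitz_on_diff:
  assumes "bounded_lipschitz_on S f" "bounded_lipschitz_on S g"
  shows "bounded_lipschitz_on S (\<lambda>p. f p - g p)"
  using assms unfolding bounded_lipschitz_on_def by (blast intro: bounded_minus_comp lipschitz_on_diff)

lemma bounded_lipschitz_on_mult:
  fixes f g :: "'a::metric_space \<Rightarrow> 'b::real_normed_algebra"
  assumes "bounded_lipschitz_on S f" "bounded_lipschitz_on S g"
  shows "bounded_lipschitz_on S (\<lambda>p. f p * g p)"
proof -
  obtain B1 L1 where f: "0 \<le> B1" "\<And>p. p \<in> S \<Longrightarrow> norm (f p) \<le> B1" "L1-lipschitz_on S f"
    using bounded_lipschitz_onE[OF assms(1)] by blast
  obtain B2 L2 where g: "0 \<le> B2" "\<And>p. p \<in> S \<Longrightarrow> norm (g p) \<le> B2" "L2-lipschitz_on S g"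
    using bounded_lipschitz_onE[OF assms(2)] by blast
  have L: "0 \<le> L1" "0 \<le> L2" using f(3) g(3) by (simp_all add: lipschitz_on_nonneg)
  show ?thesis
  proof (rule bounded_lipschitz_onI)
    show "norm (f p * g p) \<le> B1 * B2" if "p \<in> S" for p
      using f g that by (intro order_trans[OF norm_mult_ineq] mult_mono) auto
    show "(B1 * L2 + L1 * B2)-lipschitz_on S (\<lambda>p. f p * g p)"
    proof (rule lipschitz_onI)
      fix p q assume pq: "p \<in> S" "q \<in> S"
      have "f p * g p - f q * g q = f p * (g p - g q) + (f p - f q) * g q"
        by (simp add: algebra_simps)
      hence "dist (f p * g p) (f q * g q) \<le> norm (f p * (g p - g q)) + norm ((f p - f q) * g q)"
        unfolding dist_norm by (simp only: norm_triangle_ineq)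
      also have "\<dots> \<le> norm (f p) * dist (g p) (g q) + dist (f p) (f q) * norm (g q)"
        unfolding dist_norm by (intro add_mono norm_mult_ineq)
      also have "\<dots> \<le> B1 * (L2 * dist p q) + (L1 * dist p q) * B2"
        using f g pq L by (intro add_mono mult_mono lipschitz_onD) auto
      finally show "dist (f p * g p) (f q * g q) \<le> (B1 * L2 + L1 * B2) * dist p q"
        by (simp add: algebra_simps)
    qed (use f(1) g(1) L in simp)
  qed
qed

lemma bounded_lipschitz_on_inverse:
  fixes f :: "'a::metric_space \<Rightarrow> 'b::real_normed_field"
  assumes "bounded_lipschitz_on S f" "0 < m" "\<And>p. p \<in> S \<Longrightarrow> m \<le> norm (f p)"
  shows "bounded_lipschitz_on S (\<lambda>p. inverse (f p))"
proof -
  obtain B L where f: "\<And>p. p \<in> S \<Longrightarrow> norm (f p) \<le> B" "L-lipschitz_on S f"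
    using bounded_lipschitz_onE[OF assms(1)] by blast
  have nz: "f p \<noteq> 0" if "p \<in> S" for p using assms(2) assms(3)[OF that] by auto
  show ?thesis
  proof (rule bounded_lipschitz_onI)
    show "norm (inverse (f p)) \<le> inverse m" if "p \<in> S" for p
      using assms(2) assms(3)[OF that] by (simp add: norm_inverse le_imp_inverse_le)
    show "(L / m^2)-lipschitz_on S (\<lambda>p. inverse (f p))"
    proof (rule lipschitz_onI)
      fix p q assume pq: "p \<in> S" "q \<in> S"
      have "dist (inverse (f p)) (inverse (f q)) = dist (f p) (f q) / (norm (f p) * norm (f q))"
        using nz pq by (simp add: dist_norm inverse_diff_inverse norm_mult norm_inverse
            norm_minus_commute divide_inverse)
      also have "\<dots> \<le> (L * dist p q) / (m * m)"
        using assms(2,3) pq lipschitz_onD[OF f(2) pq] lipschitz_on_nonneg[OF f(2)]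
        by (intro frac_le mult_mono) auto
      finally show "dist (inverse (f p)) (inverse (f q)) \<le> L / m^2 * dist p q"
        by (simp add: power2_eq_square)
    qed (use lipschitz_on_nonneg[OF f(2)] in simp)
  qed
qed

lemma bounded_lipschitz_on_divide:
  fixes f g :: "'a::metric_space \<Rightarrow> 'b::real_normed_field"
  assumes "bounded_lipschitz_on S f" "bounded_lipschitz_on S g"
    and "0 < m" "\<And>p. p \<in> S \<Longrightarrow> m \<le> norm (g p)"
  shows "bounded_lipschitz_on S (\<lambda>p. f p / g p)"
  unfolding divide_inverse
  by (intro bounded_lipschitz_on_mult assms(1) bounded_lipschitz_on_inverse[OF assms(2-4)])

lemma bounded_lipschitz_on_sqrt:
  fixes f :: "'a::metric_space \<Rightarrow> real"
  assumes "bounded_lipschitz_on S f" "0 < m" "\<And>p. p \<in> S \<Longrightarrow> m \<le> f p"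
  shows "bounded_lipschitz_on S (\<lambda>p. sqrt (f p))"
proof -
  obtain B L where f: "\<And>p. p \<in> S \<Longrightarrow> norm (f p) \<le> B" "L-lipschitz_on S f"
    using bounded_lipschitz_onE[OF assms(1)] by blast
  show ?thesis
  proof (rule bounded_lipschitz_onI)
    show "norm (sqrt (f p)) \<le> sqrt B" if "p \<in> S" for p
      using f(1)[OF that] assms(2) assms(3)[OF that] by simp
    show "(L / (2 * sqrt m))-lipschitz_on S (\<lambda>p. sqrt (f p))"
    proof (rule lipschitz_onI)
      fix p q assume pq: "p \<in> S" "q \<in> S"
      have s: "sqrt m \<le> sqrt (f p)" "sqrt m \<le> sqrt (f q)" "0 < sqrt m"
        using assms(2,3) pq by auto
      have "(sqrt (f p) - sqrt (f q)) * (sqrt (f p) + sqrt (f q)) = f p - f q"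
        using assms(2) assms(3)[OF pq(1)] assms(3)[OF pq(2)] by (simp add: algebra_simps)
      hence "sqrt (f p) - sqrt (f q) = (f p - f q) / (sqrt (f p) + sqrt (f q))"
        by (rule eq_divide_imp[rotated]) (use s in linarith)
      hence "dist (sqrt (f p)) (sqrt (f q)) = dist (f p) (f q) / (sqrt (f p) + sqrt (f q))"
        using s by (simp add: dist_real_def abs_divide)
      also have "\<dots> \<le> (L * dist p q) / (2 * sqrt m)"
        using s lipschitz_onD[OF f(2) pq] lipschitz_on_nonneg[OF f(2)]
        by (intro frac_le) (auto simp del: real_sqrt_le_iff)
      finally show "dist (sqrt (f p)) (sqrt (f q)) \<le> L / (2 * sqrt m) * dist p q" by simp
    qed (use lipschitz_on_nonneg[OF f(2)] assms(2) in simp)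
  qed
qed

lemma bounded_lipschitz_on_compose:
  assumes "bounded_lipschitz_on T f" "K-lipschitz_on S h" "h ` S \<subseteq> T"
  shows "bounded_lipschitz_on S (\<lambda>p. f (h p))"
proof -
  obtain L where "L-lipschitz_on T f" "bounded (f ` T)"
    using assms(1) unfolding bounded_lipschitz_on_def by blast
  moreover have "(\<lambda>p. f (h p)) ` S \<subseteq> f ` T" using assms(3) by blast
  ultimately show ?thesis unfolding bounded_lipschitz_on_def
    using assms(2,3) by (blast intro: bounded_subset lipschitz_on_compose2 lipschitz_on_subset)
qed

lemma bounded_lipschitz_on_of_real:
  assumes "bounded_lipschitz_on S f"
  shows "bounded_lipschitz_on S (\<lambda>p. of_real (f p) :: 'b::real_normed_algebra_1)"
proof -
  obtain B L where f: "\<And>p. p \<in> S \<Longrightarrow> norm (f p) \<le> B" "L-lipschitz_on S f"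
    using bounded_lipschitz_onE[OF assms] by blast
  show ?thesis
    by (rule bounded_lipschitz_onI[of _ _ B L]) (use f in \<open>auto simp: lipschitz_on_def dist_norm simp flip: of_real_diff\<close>)
qed

lemma lipschitz_on_fst: "1-lipschitz_on S fst"
  by (rule lipschitz_onI) (auto simp: dist_fst_le)

lemma lipschitz_on_snd: "1-lipschitz_on S snd"
  by (rule lipschitz_onI) (auto simp: dist_snd_le)

lemma norm_le_sqrt_if_norm_power2_le:
  fixes z :: "'a::real_normed_div_algebra"
  shows "norm (z ^ 2) \<le> B \<Longrightarrow> norm z \<le> sqrt B"
  by (simp add: norm_power real_le_rsqrt)

lemma lipschitz_on_cosh_of_square:
  fixes f :: "'a::metric_space \<Rightarrow> 'b::{banach, real_normed_field}"
  assumes Q: "bounded_lipschitz_on S Q" and sq: "\<And>p. p \<in> S \<Longrightarrow> f p ^ 2 = Q p"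
  shows "\<exists>L. L-lipschitz_on S (\<lambda>p. cosh (f p))"
proof -
  obtain B L where B: "\<And>p. p \<in> S \<Longrightarrow> norm (Q p) \<le> B" and L: "L-lipschitz_on S Q"
    using bounded_lipschitz_onE[OF Q] by blast
  define C where "C = exp (sqrt B) ^ 2 / 2"
  have "(C * L)-lipschitz_on S (\<lambda>p. cosh (f p))"
  proof (rule lipschitz_onI)
    fix p q assume pq: "p \<in> S" "q \<in> S"
    have "norm (f p) \<le> sqrt B" "norm (f q) \<le> sqrt B"
      using B pq sq by (auto intro: norm_le_sqrt_if_norm_power2_le)
    hence "dist (cosh (f p)) (cosh (f q)) \<le> C * dist (Q p) (Q q)"
      unfolding C_def dist_norm using sq pq by (metis norm_cosh_diff_le)
    also have "\<dots> \<le> C * (L * dist p q)"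
      by (intro mult_left_mono lipschitz_onD[OF L pq]) (simp add: C_def)
    finally show "dist (cosh (f p)) (cosh (f q)) \<le> C * L * dist p q" by simp
  qed (simp add: C_def lipschitz_on_nonneg[OF L])
  thus ?thesis ..
qed

lemma tendsto_cosh_of_square:
  fixes f :: "'a::metric_space \<Rightarrow> 'b::{banach, real_normed_field}"
  assumes Q: "bounded (Q ` S)" and sq: "\<And>p. p \<in> S \<Longrightarrow> f p ^ 2 = Q p"
    and lim: "(Q \<longlongrightarrow> 0) (at a within S)"
  shows "((\<lambda>p. cosh (f p)) \<longlongrightarrow> 1) (at a within S)"
proof -
  obtain B where B: "\<And>p. p \<in> S \<Longrightarrow> norm (Q p) \<le> B"
    using Q unfolding bounded_iff by blast
  have "((\<lambda>p. cosh (f p) - 1) \<longlongrightarrow> 0) (at a within S)"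
  proof (rule Lim_null_comparison)
    have "norm (cosh (f p) - 1) \<le> exp (sqrt B) ^ 2 / 2 * norm (Q p)" if p: "p \<in> S" for p
    proof -
      have "norm (f p) \<le> sqrt B" using B p sq by (auto intro: norm_le_sqrt_if_norm_power2_le)
      moreover have "norm (0::'b) \<le> sqrt B" by (rule order_trans[OF _ calculation]) simp
      ultimately show ?thesis
        using norm_cosh_diff_le[of "f p" "sqrt B" 0] sq[OF p] by simp
    qed
    thus "\<forall>\<^sub>F p in at a within S. norm (cosh (f p) - 1) \<le> exp (sqrt B) ^ 2 / 2 * norm (Q p)"
      by (auto simp: eventually_at_filter intro!: always_eventually)
    show "((\<lambda>p. exp (sqrt B) ^ 2 / 2 * norm (Q p)) \<longlongrightarrow> 0) (at a within S)"
      using tendsto_mult_right_zero[OF tendsto_norm_zero[OF lim]] .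
  qed
  thus ?thesis by (simp add: LIM_zero_iff)
qed

lemma integrable_weighted_continuous:
  fixes \<phi> :: "real \<Rightarrow> 'b::euclidean_space"
  assumes w: "w integrable_on {0..1}" "\<And>s. s \<in> {0..1} \<Longrightarrow> 0 \<le> w s"
    and \<phi>: "continuous_on {0..1} \<phi>"
  shows "(\<lambda>s. w s *\<^sub>R \<phi> s) integrable_on {0..1}"
proof -
  have "bilinear (\<lambda>(a::'b) (b::real). b *\<^sub>R a)"
    unfolding bilinear_conv_bounded_bilinear by (rule bounded_bilinear.flip[OF bounded_bilinear_scaleR])
  moreover have "\<phi> \<in> borel_measurable (lebesgue_on {0..1})"
    by (rule continuous_imp_measurable_on_sets_lebesgue[OF \<phi>]) simp
  moreover have "bounded (\<phi> ` {0..1})"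
    by (rule compact_imp_bounded[OF compact_continuous_image[OF \<phi> compact_Icc]])
  moreover have "w absolutely_integrable_on {0..1}"
    by (rule nonnegative_absolutely_integrable_1[OF w(1)]) (use w(2) in auto)
  ultimately have "(\<lambda>s. w s *\<^sub>R \<phi> s) absolutely_integrable_on {0..1}"
    using absolutely_integrable_bounded_measurable_product[of "\<lambda>a b. b *\<^sub>R a" \<phi> "{0..1}" w]
    by simp
  thus ?thesis unfolding absolutely_integrable_on_def by blast
qed

lemma norm_integral_weighted_le:
  fixes \<phi> :: "real \<Rightarrow> 'b::euclidean_space"
  assumes w: "w integrable_on {0..1}" "\<And>s. s \<in> {0..1} \<Longrightarrow> 0 \<le> w s"
    and \<phi>: "continuous_on {0..1} \<phi>" "\<And>s. s \<in> {0..1} \<Longrightarrow> norm (\<phi> s) \<le> B"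
  shows "norm (integral {0..1} (\<lambda>s. w s *\<^sub>R \<phi> s)) \<le> integral {0..1} w * B"
proof -
  have "norm (integral {0..1} (\<lambda>s. w s *\<^sub>R \<phi> s)) \<le> integral {0..1} (\<lambda>s. w s * B)"
  proof (rule integral_norm_bound_integral[OF integrable_weighted_continuous[OF w \<phi>(1)]])
    show "(\<lambda>s. w s * B) integrable_on {0..1}" using integrable_on_mult_left[OF w(1)] .
    show "norm (w s *\<^sub>R \<phi> s) \<le> w s * B" if "s \<in> {0..1}" for s
      using w(2)[OF that] \<phi>(2)[OF that] by (simp add: mult_left_mono)
  qed
  thus ?thesis by simp
qed

lemma bounded_lipschitz_on_weighted_integral:
  fixes f :: "'c::metric_space \<Rightarrow> 'b::euclidean_space" and \<gamma> :: "'a::metric_space \<Rightarrow> real \<Rightarrow> 'c"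
  assumes w: "w integrable_on {0..1}" "\<And>s. s \<in> {0..1} \<Longrightarrow> 0 \<le> w s"
    and f: "bounded_lipschitz_on T f"
    and \<gamma>_cont: "\<And>p. p \<in> S \<Longrightarrow> continuous_on {0..1} (\<gamma> p)"
    and \<gamma>_in: "\<And>p s. p \<in> S \<Longrightarrow> s \<in> {0..1} \<Longrightarrow> \<gamma> p s \<in> T"
    and \<gamma>_lip: "\<And>s. s \<in> {0..1} \<Longrightarrow> K-lipschitz_on S (\<lambda>p. \<gamma> p s)"
  shows "bounded_lipschitz_on S (\<lambda>p. integral {0..1} (\<lambda>s. w s *\<^sub>R f (\<gamma> p s)))"
proof -
  obtain B L where B: "\<And>t. t \<in> T \<Longrightarrow> norm (f t) \<le> B" and L: "L-lipschitz_on T f"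
    using bounded_lipschitz_onE[OF f] by blast
  have cont: "continuous_on {0..1} (\<lambda>s. f (\<gamma> p s))" if "p \<in> S" for p
    by (rule continuous_on_compose2[OF bounded_lipschitz_on_continuous_on[OF f] \<gamma>_cont[OF that]])
      (use \<gamma>_in that in blast)
  have K: "0 \<le> K" using \<gamma>_lip[of 0] by (simp add: lipschitz_on_nonneg)
  have W: "0 \<le> integral {0..1} w" by (rule integral_nonneg[OF w(1)]) (use w(2) in auto)
  show ?thesis
  proof (rule bounded_lipschitz_onI)
    show "norm (integral {0..1} (\<lambda>s. w s *\<^sub>R f (\<gamma> p s))) \<le> integral {0..1} w * B" if "p \<in> S" for p
      by (rule norm_integral_weighted_le[OF w cont[OF that] B[OF \<gamma>_in[OF that]]])
    show "(integral {0..1} w * (L * K))-lipschitz_on S (\<lambda>p. integral {0..1} (\<lambda>s. w s *\<^sub>R f (\<gamma> p s)))"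
    proof (rule lipschitz_onI)
      fix p q assume pq: "p \<in> S" "q \<in> S"
      have "integral {0..1} (\<lambda>s. w s *\<^sub>R f (\<gamma> p s)) - integral {0..1} (\<lambda>s. w s *\<^sub>R f (\<gamma> q s))
          = integral {0..1} (\<lambda>s. w s *\<^sub>R (f (\<gamma> p s) - f (\<gamma> q s)))"
        unfolding scaleR_diff_right
        by (intro integral_diff[symmetric] integrable_weighted_continuous w cont pq)
      also have "norm \<dots> \<le> integral {0..1} w * (L * (K * dist p q))"
      proof (rule norm_integral_weighted_le[OF w])
        show "continuous_on {0..1} (\<lambda>s. f (\<gamma> p s) - f (\<gamma> q s))"
          using pq by (intro continuous_on_diff cont)
        fix s :: real assume s: "s \<in> {0..1}"
        have "dist (f (\<gamma> p s)) (f (\<gamma> q s)) \<le> L * dist (\<gamma> p s) (\<gamma> q s)"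
          using \<gamma>_in pq s by (intro lipschitz_onD[OF L])
        also have "\<dots> \<le> L * (K * dist p q)"
          using lipschitz_onD[OF \<gamma>_lip[OF s] pq] lipschitz_on_nonneg[OF L] by (simp add: mult_left_mono)
        finally show "norm (f (\<gamma> p s) - f (\<gamma> q s)) \<le> L * (K * dist p q)" by (simp add: dist_norm)
      qed
      finally show "dist (integral {0..1} (\<lambda>s. w s *\<^sub>R f (\<gamma> p s))) (integral {0..1} (\<lambda>s. w s *\<^sub>R f (\<gamma> q s)))
          \<le> integral {0..1} w * (L * K) * dist p q"
        by (simp add: dist_norm mult_ac)
    qed (use W K lipschitz_on_nonneg[OF L] in simp)
  qed
qed

lemma powr_minus_half: "0 \<le> a \<Longrightarrow> a powr (-1/2) = inverse (sqrt a)"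
  using powr_minus[of a "1/2"] by (simp add: powr_half_sqrt)

lemma integrable_powr_minus_half: "(\<lambda>s::real. s powr (-1/2)) integrable_on {0..1}"
  by (rule integrable_on_powr_from_0) auto

text \<open>Pairs are (u, x) as in the paper, so the segment runs from snd p to fst p.\<close>
definition lerp :: "real \<times> real \<Rightarrow> real \<Rightarrow> real" where
  "lerp p s = snd p + s * (fst p - snd p)"

lemma lerp_in_interval:
  assumes "p \<in> {a..b} \<times> {a..b}" "s \<in> {0..1}"
  shows "lerp p s \<in> {a..b}"
proof -
  have "(1 - s) *\<^sub>R snd p + s *\<^sub>R fst p \<in> {a..b}"
    using assms by (intro convexD) auto
  thus ?thesis by (simp add: lerp_def algebra_simps)
qed

lemma lipschitz_on_lerp: "s \<in> {0..1} \<Longrightarrow> 1-lipschitz_on S (\<lambda>p. lerp p s)"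
proof (rule lipschitz_onI)
  fix p q assume s: "s \<in> {0..1}"
  have "dist (lerp p s) (lerp q s) = \<bar>(1 - s) * (snd p - snd q) + s * (fst p - fst q)\<bar>"
    by (simp add: lerp_def dist_real_def algebra_simps)
  also have "\<dots> \<le> (1 - s) * \<bar>snd p - snd q\<bar> + s * \<bar>fst p - fst q\<bar>"
    using s by (auto intro: order_trans[OF abs_triangle_ineq] simp: abs_mult)
  also have "\<dots> \<le> (1 - s) * dist p q + s * dist p q"
    using s dist_fst_le[of p q] dist_snd_le[of p q]
    by (intro add_mono mult_left_mono) (auto simp: dist_real_def)
  finally show "dist (lerp p s) (lerp q s) \<le> 1 * dist p q" by (simp add: algebra_simps)
qed simp

lemma continuous_on_lerp: "continuous_on A (lerp p)"
  unfolding lerp_def by (intro continuous_intros)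

lemma diff_eq_mean_derivative:
  assumes f: "\<And>t. t \<in> {a..b} \<Longrightarrow> (f has_real_derivative f' t) (at t within {a..b})"
    and f': "continuous_on {a..b} f'"
    and p: "p \<in> {a..b} \<times> {a..b}"
  shows "f (fst p) - f (snd p) = (fst p - snd p) * integral {0..1} (\<lambda>\<tau>. f' (lerp p \<tau>))"
proof -
  have lerp_in: "lerp p ` {0..1} \<subseteq> {a..b}" using lerp_in_interval[OF p] by blast
  have "((\<lambda>\<tau>. f (lerp p \<tau>)) has_vector_derivative (fst p - snd p) * f' (lerp p \<tau>)) (at \<tau> within {0..1})"
    if "\<tau> \<in> {0..1}" for \<tau>
  proof -
    have "(f has_real_derivative f' (lerp p \<tau>)) (at (lerp p \<tau>) within lerp p ` {0..1})"
      using f lerp_in that by (blast intro: DERIV_subset)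
    moreover have "(lerp p has_real_derivative (fst p - snd p)) (at \<tau> within {0..1})"
      unfolding lerp_def by (auto intro!: derivative_eq_intros)
    ultimately have "((f \<circ> lerp p) has_real_derivative f' (lerp p \<tau>) * (fst p - snd p)) (at \<tau> within {0..1})"
      by (rule DERIV_image_chain)
    thus ?thesis by (simp add: has_real_derivative_iff_has_vector_derivative o_def mult.commute)
  qed
  hence "((\<lambda>\<tau>. (fst p - snd p) * f' (lerp p \<tau>)) has_integral f (lerp p 1) - f (lerp p 0)) {0..1}"
    by (intro fundamental_theorem_of_calculus) auto
  hence "((\<lambda>\<tau>. (fst p - snd p) * f' (lerp p \<tau>)) has_integral f (fst p) - f (snd p)) {0..1}"
    by (simp add: lerp_def)
  moreover have "(\<lambda>\<tau>. f' (lerp p \<tau>)) integrable_on {0..1}"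
    by (intro integrable_continuous_interval continuous_on_compose2[OF f' continuous_on_lerp lerp_in])
  hence "((\<lambda>\<tau>. (fst p - snd p) * f' (lerp p \<tau>)) has_integral
      (fst p - snd p) * integral {0..1} (\<lambda>\<tau>. f' (lerp p \<tau>))) {0..1}"
    by (rule has_integral_mult_right[OF integrable_integral])
  ultimately show ?thesis by (rule has_integral_unique)
qed

lemma continuous_pos_lower_bound:
  fixes f :: "'a::topological_space \<Rightarrow> real"
  assumes "compact S" "continuous_on S f" "\<And>x. x \<in> S \<Longrightarrow> 0 < f x"
  obtains m where "0 < m" "\<And>x. x \<in> S \<Longrightarrow> m \<le> f x"
proof (cases "S = {}")
  case False
  then obtain x0 where "x0 \<in> S" "\<And>x. x \<in> S \<Longrightarrow> f x0 \<le> f x"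
    using continuous_attains_inf[OF assms(1) _ assms(2)] by blast
  thus ?thesis using that assms(3) by blast
qed (use that[of 1] in simp)

lemma lipschitz_on_of_bounded_derivative:
  fixes f :: "real \<Rightarrow> real"
  assumes "\<And>t. t \<in> {a..b} \<Longrightarrow> (f has_real_derivative f' t) (at t within {a..b})"
    and "\<And>t. t \<in> {a..b} \<Longrightarrow> \<bar>f' t\<bar> \<le> B" "0 \<le> B"
  shows "B-lipschitz_on {a..b} f"
proof (rule lipschitz_onI)
  fix x y assume "x \<in> {a..b}" "y \<in> {a..b}"
  thus "dist (f x) (f y) \<le> B * dist x y"
    unfolding dist_norm by (intro field_differentiable_bound[of "{a..b}" f f']) (use assms in auto)
qed fact

locale herglotz_profile =
  fixes R :: real and c c' :: "real \<Rightarrow> real" and lam :: "real \<Rightarrow> complex"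
  assumes R: "0 < R" "R < 1"
    and c_pos: "\<forall>r\<in>{R..1}. c r > 0"
    and c_deriv: "\<forall>r\<in>{R..1}. (c has_real_derivative c' r) (at r within {R..1})"
    and c'_lip: "\<exists>L. L-lipschitz_on {R..1} c'"
    and herglotz: "\<forall>r\<in>{R..1}. \<exists>D>0. ((\<lambda>t. t / c t) has_real_derivative D) (at r within {R..1})"
    and lam_lip: "\<exists>L. L-lipschitz_on {R..1} lam"
begin

lemma bounded_lipschitz_c': "bounded_lipschitz_on {R..1} c'"
  using c'_lip lipschitz_on_bounded_imp_bounded_lipschitz_on bounded_closed_interval by blast

lemma bounded_lipschitz_lam: "bounded_lipschitz_on {R..1} lam"
  using lam_lip lipschitz_on_bounded_imp_bounded_lipschitz_on bounded_closed_interval by blast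

lemma bounded_lipschitz_id: "bounded_lipschitz_on {R..1} (\<lambda>t. t)"
  by (rule lipschitz_on_bounded_imp_bounded_lipschitz_on[OF lipschitz_on_id]) simp

lemma bounded_lipschitz_c: "bounded_lipschitz_on {R..1} c"
proof -
  obtain B where "0 \<le> B" "\<And>t. t \<in> {R..1} \<Longrightarrow> norm (c' t) \<le> B"
    using bounded_lipschitz_onE[OF bounded_lipschitz_c'] by blast
  hence "B-lipschitz_on {R..1} c"
    using c_deriv by (intro lipschitz_on_of_bounded_derivative) auto
  thus ?thesis by (rule lipschitz_on_bounded_imp_bounded_lipschitz_on) simp
qed

lemma c_lower_bound: obtains m where "0 < m" "\<And>t. t \<in> {R..1} \<Longrightarrow> m \<le> c t"
  using continuous_pos_lower_bound[OF compact_Icc bounded_lipschitz_on_continuous_on[OF bounded_lipschitz_c]]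
    c_pos by blast

definition rho :: "real \<Rightarrow> real" where "rho t = t / c t"

definition rho' :: "real \<Rightarrow> real" where "rho' t = (c t - t * c' t) / (c t)\<^sup>2"

lemma rho_deriv: "t \<in> {R..1} \<Longrightarrow> (rho has_real_derivative rho' t) (at t within {R..1})"
proof -
  assume t: "t \<in> {R..1}"
  have "((\<lambda>t. t / c t) has_real_derivative (1 * c t - t * c' t) / (c t * c t)) (at t within {R..1})"
    using c_pos t by (intro DERIV_divide DERIV_ident c_deriv[rule_format, OF t]) force
  thus ?thesis by (simp add: rho_def[abs_def] rho'_def power2_eq_square)
qed

lemma rho'_pos: "t \<in> {R..1} \<Longrightarrow> 0 < rho' t"
proof -
  assume t: "t \<in> {R..1}"
  obtain D where D: "D > 0" "(rho has_real_derivative D) (at t within {R..1})"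
    using herglotz t unfolding rho_def[abs_def] by blast
  have "D = rho' t"
    using vector_derivative_unique_within_closed_interval[OF R(2)] t D(2) rho_deriv[OF t]
    by (simp add: has_real_derivative_iff_has_vector_derivative)
  thus ?thesis using D(1) by simp
qed

lemma bounded_lipschitz_rho: "bounded_lipschitz_on {R..1} rho"
proof -
  obtain m where m: "0 < m" "\<And>t. t \<in> {R..1} \<Longrightarrow> m \<le> c t" using c_lower_bound by blast
  show ?thesis unfolding rho_def[abs_def]
    by (rule bounded_lipschitz_on_divide[OF bounded_lipschitz_id bounded_lipschitz_c m(1)])
      (use m(2) in force)
qed

lemma bounded_lipschitz_rho': "bounded_lipschitz_on {R..1} rho'"
proof -
  obtain m where m: "0 < m" "\<And>t. t \<in> {R..1} \<Longrightarrow> m \<le> c t" using c_lower_bound by blast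
  have low: "m * m \<le> norm (c t * c t)" if "t \<in> {R..1}" for t
    using m(1) m(2)[OF that] by (simp add: mult_mono)
  show ?thesis unfolding rho'_def[abs_def] power2_eq_square
  proof (rule bounded_lipschitz_on_divide[OF _ _ _ low])
    show "bounded_lipschitz_on {R..1} (\<lambda>t. c t - t * c' t)"
      by (intro bounded_lipschitz_on_diff bounded_lipschitz_on_mult bounded_lipschitz_id
          bounded_lipschitz_c bounded_lipschitz_c')
    show "bounded_lipschitz_on {R..1} (\<lambda>t. c t * c t)"
      by (intro bounded_lipschitz_on_mult bounded_lipschitz_c)
  qed (use m(1) in simp)
qed

lemma rho_lower_bound: obtains m where "0 < m" "\<And>t. t \<in> {R..1} \<Longrightarrow> m \<le> rho t"
proof (rule continuous_pos_lower_bound[OF compact_Icc bounded_lipschitz_on_continuous_on[OF bounded_lipschitz_rho]])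
  show "0 < rho t" if "t \<in> {R..1}" for t using c_pos R that by (simp add: rho_def)
qed (use that in blast)

lemma rho'_lower_bound: obtains m where "0 < m" "\<And>t. t \<in> {R..1} \<Longrightarrow> m \<le> rho' t"
  using continuous_pos_lower_bound[OF compact_Icc bounded_lipschitz_on_continuous_on[OF bounded_lipschitz_rho']]
    rho'_pos by blast

definition slope :: "real \<times> real \<Rightarrow> real" where
  "slope p = integral {0..1} (\<lambda>\<tau>. rho' (lerp p \<tau>))"

lemma rho_diff_eq_slope:
  "p \<in> {R..1} \<times> {R..1} \<Longrightarrow> rho (fst p) - rho (snd p) = (fst p - snd p) * slope p"
  unfolding slope_def
  by (rule diff_eq_mean_derivative[OF rho_deriv bounded_lipschitz_on_continuous_on[OF bounded_lipschitz_rho']])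

lemma bounded_lipschitz_slope: "bounded_lipschitz_on ({R..1} \<times> {R..1}) slope"
proof -
  have "bounded_lipschitz_on ({R..1} \<times> {R..1}) (\<lambda>p. integral {0..1} (\<lambda>\<tau>. 1 *\<^sub>R rho' (lerp p \<tau>)))"
    by (rule bounded_lipschitz_on_weighted_integral[OF _ _ bounded_lipschitz_rho' continuous_on_lerp
          lerp_in_interval lipschitz_on_lerp]) auto
  thus ?thesis unfolding slope_def[abs_def] by simp
qed

lemma slope_lower_bound:
  obtains m where "0 < m" "\<And>p. p \<in> {R..1} \<times> {R..1} \<Longrightarrow> m \<le> slope p"
proof -
  obtain m where m: "0 < m" "\<And>t. t \<in> {R..1} \<Longrightarrow> m \<le> rho' t"
    using rho'_lower_bound by blast
  have "m \<le> slope p" if p: "p \<in> {R..1} \<times> {R..1}" for p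
  proof -
    have "(\<lambda>\<tau>. rho' (lerp p \<tau>)) integrable_on {0..1}"
      by (intro integrable_continuous_interval continuous_on_compose2[OF
            bounded_lipschitz_on_continuous_on[OF bounded_lipschitz_rho'] continuous_on_lerp])
        (use lerp_in_interval[OF p] in blast)
    hence "integral {0..1} (\<lambda>_::real. m) \<le> slope p"
      unfolding slope_def
      by (rule integral_le[OF integrable_const_ivl]) (use m(2) lerp_in_interval[OF p] in auto)
    thus ?thesis by simp
  qed
  thus ?thesis using that m(1) by blast
qed

definition defect :: "real \<times> real \<Rightarrow> real" where
  "defect p = (rho (fst p) + rho (snd p)) * slope p"

lemma bounded_lipschitz_defect: "bounded_lipschitz_on ({R..1} \<times> {R..1}) defect"
  unfolding defect_def[abs_def]
  by (intro bounded_lipschitz_on_mult bounded_lipschitz_on_add bounded_lipschitz_slope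
      bounded_lipschitz_on_compose[OF bounded_lipschitz_rho lipschitz_on_fst]
      bounded_lipschitz_on_compose[OF bounded_lipschitz_rho lipschitz_on_snd]) auto

lemma defect_lower_bound:
  obtains m where "0 < m" "\<And>p. p \<in> {R..1} \<times> {R..1} \<Longrightarrow> m \<le> defect p"
proof -
  obtain m1 where m1: "0 < m1" "\<And>p. p \<in> {R..1} \<times> {R..1} \<Longrightarrow> m1 \<le> slope p"
    using slope_lower_bound by blast
  obtain m2 where m2: "0 < m2" "\<And>t. t \<in> {R..1} \<Longrightarrow> m2 \<le> rho t"
    using rho_lower_bound by blast
  have "(m2 + m2) * m1 \<le> defect p" if p: "p \<in> {R..1} \<times> {R..1}" for p
  proof -
    have "m2 \<le> rho (fst p)" "m2 \<le> rho (snd p)" "m1 \<le> slope p" using m1(2) m2(2) p by auto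
    thus ?thesis unfolding defect_def using m1(1) m2(1) by (intro mult_mono add_mono) auto
  qed
  thus ?thesis using that m1(1) m2(1) by (metis add_pos_pos mult_pos_pos)
qed

lemma one_minus_ratio_square:
  assumes "R \<le> x" "x \<le> u" "u \<le> 1"
  shows "1 - (x * c u / (u * c x))\<^sup>2 = (u - x) * defect (u, x) / (rho u)\<^sup>2"
proof -
  have "c u > 0" "c x > 0" "u > 0" "x > 0" using c_pos assms R by auto
  hence ratio: "x * c u / (u * c x) = rho x / rho u" and "rho u > 0" by (simp_all add: rho_def field_simps)
  have "1 - (rho x / rho u)\<^sup>2 = (rho u - rho x) * (rho u + rho x) / (rho u)\<^sup>2"
    using \<open>rho u > 0\<close> by (simp add: field_simps power2_eq_square)
  also have "(rho u - rho x) * (rho u + rho x) = (u - x) * defect (u, x)"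
    using rho_diff_eq_slope[of "(u, x)"] assms by (simp add: defect_def)
  finally show ?thesis unfolding ratio .
qed

definition kernel :: "real \<times> real \<Rightarrow> complex" where
  "kernel p = lam (fst p) * complex_of_real (fst p / ((c (fst p))\<^sup>2 * sqrt (defect p)))"

lemma bounded_lipschitz_kernel: "bounded_lipschitz_on ({R..1} \<times> {R..1}) kernel"
proof -
  obtain mc where mc: "0 < mc" "\<And>t. t \<in> {R..1} \<Longrightarrow> mc \<le> c t" using c_lower_bound by blast
  obtain md where md: "0 < md" "\<And>p. p \<in> {R..1} \<times> {R..1} \<Longrightarrow> md \<le> defect p"
    using defect_lower_bound by blast
  have low: "mc * mc * sqrt md \<le> norm (c (fst p) * c (fst p) * sqrt (defect p))"
    if "p \<in> {R..1} \<times> {R..1}" for p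
  proof -
    have "mc \<le> c (fst p)" "sqrt md \<le> sqrt (defect p)" using mc(2) md(2) that by auto
    thus ?thesis using mc(1) md(1) by (simp add: mult_mono)
  qed
  have fst_in: "fst ` ({R..1} \<times> {R..1}) \<subseteq> {R..1}" by auto
  note compose_fst = bounded_lipschitz_on_compose[OF _ lipschitz_on_fst fst_in]
  show ?thesis unfolding kernel_def[abs_def] power2_eq_square
  proof (intro bounded_lipschitz_on_mult bounded_lipschitz_on_of_real compose_fst bounded_lipschitz_lam)
    show "bounded_lipschitz_on ({R..1} \<times> {R..1}) (\<lambda>p. fst p / (c (fst p) * c (fst p) * sqrt (defect p)))"
    proof (rule bounded_lipschitz_on_divide[OF _ _ _ low])
      show "bounded_lipschitz_on ({R..1} \<times> {R..1}) (\<lambda>p. c (fst p) * c (fst p) * sqrt (defect p))"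
        by (intro bounded_lipschitz_on_mult compose_fst bounded_lipschitz_c
            bounded_lipschitz_on_sqrt[OF bounded_lipschitz_defect md])
    qed (use mc(1) md(1) compose_fst[OF bounded_lipschitz_id] in simp_all)
  qed
qed

text \<open>At u = x both sides are junk values 0, since 0 powr a = 0.\<close>
lemma lam_H_eq:
  assumes "R \<le> x" "x \<le> u" "u \<le> 1"
  shows "lam u * complex_of_real (H c u x) = (u - x) powr (-1/2) *\<^sub>R kernel (u, x)"
proof -
  obtain md where md: "0 < md" "\<And>p. p \<in> {R..1} \<times> {R..1} \<Longrightarrow> md \<le> defect p"
    using defect_lower_bound by blast
  have pos: "0 < c u" "0 < u" "0 < rho u" "0 < defect (u, x)"
    using c_pos assms R md by (auto simp: rho_def intro: less_le_trans)
  have nonneg: "0 \<le> (u - x) * defect (u, x) / (rho u)\<^sup>2" using pos assms by simp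
  have "H c u x = 1 / c u * inverse (sqrt ((u - x) * defect (u, x) / (rho u)\<^sup>2))"
    unfolding H_def one_minus_ratio_square[OF assms] powr_minus_half[OF nonneg] ..
  also have "sqrt ((u - x) * defect (u, x) / (rho u)\<^sup>2) = sqrt (u - x) * sqrt (defect (u, x)) / rho u"
    using pos by (simp add: real_sqrt_mult real_sqrt_divide)
  also have "1 / c u * inverse \<dots> = inverse (sqrt (u - x)) * (u / ((c u)\<^sup>2 * sqrt (defect (u, x))))"
    by (simp add: rho_def divide_inverse inverse_mult_distrib power2_eq_square mult_ac)
  finally have "H c u x = inverse (sqrt (u - x)) * (u / ((c u)\<^sup>2 * sqrt (defect (u, x))))" .
  moreover have "(u - x) powr (-1/2) = inverse (sqrt (u - x))"
    using assms by (intro powr_minus_half) simp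
  ultimately show ?thesis by (simp add: kernel_def scaleR_conv_of_real mult_ac)
qed

text \<open>The integral of lam u H(u;x) over [x, r] after substituting u = x + s (r - x).\<close>
definition reduced :: "real \<times> real \<Rightarrow> complex" where
  "reduced p = integral {0..1} (\<lambda>s. s powr (-1/2) *\<^sub>R kernel (lerp p s, snd p))"

lemma kernel_along_segment:
  assumes "p \<in> {R..1} \<times> {R..1}"
  shows "continuous_on {0..1} (\<lambda>s. kernel (lerp p s, snd p))"
    and "\<And>s. s \<in> {0..1} \<Longrightarrow> (lerp p s, snd p) \<in> {R..1} \<times> {R..1}"
proof -
  show in_square: "(lerp p s, snd p) \<in> {R..1} \<times> {R..1}" if "s \<in> {0..1}" for s
    using lerp_in_interval[OF assms that] assms by auto
  show "continuous_on {0..1} (\<lambda>s. kernel (lerp p s, snd p))"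
    by (rule continuous_on_compose2[OF bounded_lipschitz_on_continuous_on[OF bounded_lipschitz_kernel]])
      (use in_square in \<open>auto intro!: continuous_intros continuous_on_lerp\<close>)
qed

lemma bounded_lipschitz_reduced: "bounded_lipschitz_on ({R..1} \<times> {R..1}) reduced"
  unfolding reduced_def[abs_def]
proof (rule bounded_lipschitz_on_weighted_integral[OF integrable_powr_minus_half _ bounded_lipschitz_kernel])
  show "\<And>s. s \<in> {0..1} \<Longrightarrow> (sqrt (1\<^sup>2 + 1\<^sup>2))-lipschitz_on ({R..1} \<times> {R..1}) (\<lambda>p. (lerp p s, snd p))"
    by (intro lipschitz_on_Pair lipschitz_on_lerp lipschitz_on_snd)
qed (use kernel_along_segment in \<open>auto intro!: continuous_intros continuous_on_lerp\<close>)

lemma has_integral_lam_H: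
  assumes xr: "R \<le> x" "x < r" "r \<le> 1"
  shows "((\<lambda>u. lam u * complex_of_real (H c u x)) has_integral sqrt (r - x) *\<^sub>R reduced (r, x)) {x..r}"
proof -
  define d where "d = r - x"
  have d: "0 < d" using xr by (simp add: d_def)
  define f where "f u = (u - x) powr (-1/2) *\<^sub>R kernel (u, x)" for u
  have "((\<lambda>s. s powr (-1/2) *\<^sub>R kernel (lerp (r, x) s, x)) has_integral reduced (r, x)) {0..1}"
    unfolding reduced_def snd_conv
    by (intro integrable_integral integrable_weighted_continuous[OF integrable_powr_minus_half])
      (use kernel_along_segment[of "(r, x)"] xr in auto)
  hence "((\<lambda>s. d powr (-1/2) *\<^sub>R (s powr (-1/2) *\<^sub>R kernel (lerp (r, x) s, x)))
      has_integral d powr (-1/2) *\<^sub>R reduced (r, x)) {0..1}"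
    by (rule has_integral_cmul)
  hence "((\<lambda>s. f (d *\<^sub>R s + x)) has_integral d powr (-1/2) *\<^sub>R reduced (r, x)) {0..1}"
  proof (rule has_integral_eq[rotated])
    fix s :: real assume s: "s \<in> {0..1}"
    have "lerp (r, x) s = d * s + x" by (simp add: lerp_def d_def algebra_simps)
    moreover have "(d * s) powr (-1/2) = d powr (-1/2) * s powr (-1/2)"
      using d s by (simp add: powr_mult)
    ultimately show "d powr (-1/2) *\<^sub>R (s powr (-1/2) *\<^sub>R kernel (lerp (r, x) s, x)) = f (d *\<^sub>R s + x)"
      by (simp add: f_def)
  qed
  moreover have "d powr (-1/2) *\<^sub>R reduced (r, x) = (sqrt d *\<^sub>R reduced (r, x)) /\<^sub>R d ^ DIM(real)"
  proof -
    have "d powr (-1/2) = inverse (sqrt d)" using d by (intro powr_minus_half) simp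
    also have "\<dots> = inverse d * sqrt d" using d by (simp add: divide_simps)
    finally show ?thesis by simp
  qed
  moreover have "{0..1} = cbox ((x - x) /\<^sub>R d) ((r - x) /\<^sub>R d)" using d by (simp add: d_def)
  ultimately have "(f has_integral sqrt d *\<^sub>R reduced (r, x)) (cbox x r)"
    using has_integral_affinity_iff[OF d] by metis
  hence "(f has_integral sqrt d *\<^sub>R reduced (r, x)) {x..r}" by simp
  thus ?thesis unfolding d_def
    by (rule has_integral_eq[rotated]) (use xr lam_H_eq in \<open>auto simp: f_def\<close>)
qed

lemma Lam_eq_cosh:
  "R \<le> x \<Longrightarrow> x < r \<Longrightarrow> r \<le> 1 \<Longrightarrow> Lam c lam r x = cosh (sqrt (r - x) *\<^sub>R reduced (r, x))"
  unfolding Lam_def using integral_unique[OF has_integral_lam_H] by simp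

lemma bounded_lipschitz_reduced_square:
  "bounded_lipschitz_on ({R..1} \<times> {R..1}) (\<lambda>p. complex_of_real (fst p - snd p) * reduced p ^ 2)"
  unfolding power2_eq_square
  by (intro bounded_lipschitz_on_mult bounded_lipschitz_on_of_real bounded_lipschitz_reduced
      lipschitz_on_bounded_imp_bounded_lipschitz_on[OF lipschitz_on_diff[OF lipschitz_on_fst lipschitz_on_snd]])
    (simp add: bounded_Times)

lemma square_sqrt_scaled_reduced:
  "snd p \<le> fst p \<Longrightarrow>
    (sqrt (fst p - snd p) *\<^sub>R reduced p) ^ 2 = complex_of_real (fst p - snd p) * reduced p ^ 2"
  by (simp add: scaleR_conv_of_real power_mult_distrib flip: of_real_power)

lemma Lam_lipschitz:
  "\<exists>L. L-lipschitz_on {(r, x). R \<le> x \<and> x < r \<and> r \<le> 1} (\<lambda>(r, x). Lam c lam r x)"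
proof -
  let ?T = "{(r, x). R \<le> x \<and> x < r \<and> r \<le> 1}"
  have "bounded_lipschitz_on ?T (\<lambda>p. complex_of_real (fst p - snd p) * reduced p ^ 2)"
    by (rule bounded_lipschitz_on_subset[OF bounded_lipschitz_reduced_square]) auto
  moreover have "\<And>p. p \<in> ?T \<Longrightarrow>
      (sqrt (fst p - snd p) *\<^sub>R reduced p) ^ 2 = complex_of_real (fst p - snd p) * reduced p ^ 2"
    by (intro square_sqrt_scaled_reduced) auto
  ultimately have "\<exists>L. L-lipschitz_on ?T (\<lambda>p. cosh (sqrt (fst p - snd p) *\<^sub>R reduced p))"
    by (rule lipschitz_on_cosh_of_square)
  then obtain L where "L-lipschitz_on ?T (\<lambda>p. cosh (sqrt (fst p - snd p) *\<^sub>R reduced p))" ..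
  moreover have "\<And>p. p \<in> ?T \<Longrightarrow> (\<lambda>(r, x). Lam c lam r x) p = cosh (sqrt (fst p - snd p) *\<^sub>R reduced p)"
    using Lam_eq_cosh by auto
  ultimately show ?thesis using lipschitz_on_transform by blast
qed

lemma Lam_tendsto_diagonal:
  assumes "r \<in> {R..1}"
  shows "((\<lambda>(s, x). Lam c lam s x) \<longlongrightarrow> 1) (at (r, r) within {(s, x). R \<le> x \<and> x < s \<and> s \<le> 1})"
proof -
  let ?T = "{(s, x). R \<le> x \<and> x < s \<and> s \<le> 1}"
  let ?Q = "\<lambda>p. complex_of_real (fst p - snd p) * reduced p ^ 2"
  have sub: "?T \<subseteq> {R..1} \<times> {R..1}" by auto
  have "(r, r) \<in> {R..1} \<times> {R..1}" using assms by simp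
  hence "(?Q \<longlongrightarrow> ?Q (r, r)) (at (r, r) within {R..1} \<times> {R..1})"
    using bounded_lipschitz_on_continuous_on[OF bounded_lipschitz_reduced_square]
    unfolding continuous_on_def by blast
  hence "(?Q \<longlongrightarrow> 0) (at (r, r) within ?T)"
    using tendsto_within_subset[OF _ sub] by simp
  moreover have "bounded (?Q ` ?T)"
    using bounded_lipschitz_reduced_square sub unfolding bounded_lipschitz_on_def
    by (blast intro: bounded_subset)
  moreover have "\<And>p. p \<in> ?T \<Longrightarrow> (sqrt (fst p - snd p) *\<^sub>R reduced p) ^ 2 = ?Q p"
    by (intro square_sqrt_scaled_reduced) auto
  ultimately have "((\<lambda>p. cosh (sqrt (fst p - snd p) *\<^sub>R reduced p)) \<longlongrightarrow> 1) (at (r, r) within ?T)"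
    by (rule tendsto_cosh_of_square[rotated 2])
  moreover have "\<forall>\<^sub>F p in at (r, r) within ?T. cosh (sqrt (fst p - snd p) *\<^sub>R reduced p) = (\<lambda>(s, x). Lam c lam s x) p"
    using Lam_eq_cosh by (auto simp: eventually_at_filter intro!: always_eventually)
  ultimately show ?thesis by (rule Lim_transform_eventually)
qed

end

theorem lemma5p2:
  fixes R :: real and c c' :: "real \<Rightarrow> real" and lam :: "real \<Rightarrow> complex"
  assumes R: "0 < R" "R < 1"
    and c_pos: "\<forall>r\<in>{R..1}. c r > 0"
    and c_deriv: "\<forall>r\<in>{R..1}. (c has_real_derivative c' r) (at r within {R..1})"
    and c'_lip: "\<exists>L. L-lipschitz_on {R..1} c'"
    and herglotz: "\<forall>r\<in>{R..1}. \<exists>D>0. ((\<lambda>t. t / c t) has_real_derivative D) (at r within {R..1})"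
    and lam_lip: "\<exists>L. L-lipschitz_on {R..1} lam"
  shows "(\<forall>r x. R \<le> x \<and> x < r \<and> r \<le> 1 \<longrightarrow>
            (\<lambda>u. lam u * complex_of_real (H c u x)) integrable_on {x..r})
    \<and> (\<exists>L. L-lipschitz_on {(r, x). R \<le> x \<and> x < r \<and> r \<le> 1} (\<lambda>(r, x). Lam c lam r x))
    \<and> (\<forall>r\<in>{R..1}. ((\<lambda>(s, x). Lam c lam s x) \<longlongrightarrow> 1)
            (at (r, r) within {(s, x). R \<le> x \<and> x < s \<and> s \<le> 1}))"
proof -
  interpret herglotz_profile R c c' lam
    using assms by unfold_locales
  show ?thesis
    using has_integral_lam_H Lam_lipschitz Lam_tendsto_diagonal by blast
qed

end
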